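(* No flower is a Burling graph.
   Context: Graphs are finite, without loops or multiple edges. A hole in a graph is an induced cycle of length at least $4$. A flower is a graph $G$ consisting of a hole $H$ together with, for every edge $e$ of $H$, a hole $H_e$ of $G$ containing $e$, such that $V(H)\cap V(H_e)$ is exactly the set of the two endpoints of $e$; for all distinct edges $e,f$ of $H$, $V(H_e)\cap V(H_f)$ is the set of common endpoints of $e$ and $f$; and the vertices and edges of $G$ are exactly those of the holes $H_e$. In a rooted tree $T$ with root $r$, each non-root vertex $v$ has a parent $p(v)$; children, leaves, ancestors and descendants are as usual. A branch is a sequence $v_1\dots v_k$ ($k\ge0$) with $v_i$ the parent of $v_{i+1}$; it starts at $v_1$. A Burling tree is a 4-tuple $(T,r,\ell,c)$: $T$ a rooted tree with root $r$; $\ell$ assigns to each non-leaf vertex $v$ one of its children $\ell(v)$ (the last-born of $v$); $c$ assigns to every vertex $v$ that is neither the root nor a last-born the vertex-set of a (possibly empty) branch starting at $\ell(p(v))$, and $c(v)=\emptyset$ if $v$ is the root or a last-born. The oriented graph fully derived from it has vertex-set $V(T)$ and an arc $uv$ iff $v\in c(u)$. A (non-oriented) graph is a Burling graph if it is isomorphic to an induced subgraph of the underlying graph of the oriented graph fully derived from some Burling tree. *)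

theory Defs
  imports Main
begin

definition sgraph :: "'a set \<Rightarrow> ('a \<Rightarrow> 'a \<Rightarrow> bool) \<Rightarrow> bool" where
  "sgraph V E \<longleftrightarrow> finite V \<and> (\<forall>x y. E x y \<longrightarrow> x \<in> V \<and> y \<in> V \<and> x \<noteq> y \<and> E y x)"

definition is_hole :: "'a set \<Rightarrow> ('a \<Rightarrow> 'a \<Rightarrow> bool) \<Rightarrow> 'a set \<Rightarrow> bool" where
  "is_hole V E C \<longleftrightarrow> C \<subseteq> V \<and>
     (\<exists>vs. distinct vs \<and> set vs = C \<and> length vs \<ge> 4 \<and>
        (\<forall>i < length vs. \<forall>j < length vs.
            E (vs ! i) (vs ! j) \<longleftrightarrow> (j = Suc i mod length vs \<or> i = Suc j mod length vs)))"

definition induced_edges :: "('a \<Rightarrow> 'a \<Rightarrow> bool) \<Rightarrow> 'a set \<Rightarrow> 'a set set" where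
  "induced_edges E C = {{x, y} | x y. x \<in> C \<and> y \<in> C \<and> E x y}"

definition flower :: "'a set \<Rightarrow> ('a \<Rightarrow> 'a \<Rightarrow> bool) \<Rightarrow> bool" where
  "flower V E \<longleftrightarrow> (\<exists>H Hf.
     is_hole V E H \<and>
     (\<forall>e \<in> induced_edges E H. is_hole V E (Hf e) \<and> e \<subseteq> Hf e \<and> H \<inter> Hf e = e) \<and>
     (\<forall>e \<in> induced_edges E H. \<forall>f \<in> induced_edges E H. e \<noteq> f \<longrightarrow> Hf e \<inter> Hf f = e \<inter> f) \<and>
     V = (\<Union>e \<in> induced_edges E H. Hf e) \<and>
     (\<forall>x y. E x y \<longleftrightarrow> (\<exists>e \<in> induced_edges E H. {x, y} \<in> induced_edges E (Hf e))))"

text \<open>Rooted trees: vertex set T, root r, parent function p (relevant on T - {r}).\<close>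
definition children :: "nat set \<Rightarrow> nat \<Rightarrow> (nat \<Rightarrow> nat) \<Rightarrow> nat \<Rightarrow> nat set" where
  "children T r p v = {u \<in> T - {r}. p u = v}"

definition rooted_tree :: "nat set \<Rightarrow> nat \<Rightarrow> (nat \<Rightarrow> nat) \<Rightarrow> bool" where
  "rooted_tree T r p \<longleftrightarrow> finite T \<and> r \<in> T \<and> (\<forall>v \<in> T - {r}. p v \<in> T) \<and>
     (\<forall>v \<in> T. \<exists>n. (p ^^ n) v = r)"

definition is_branch :: "nat set \<Rightarrow> nat \<Rightarrow> (nat \<Rightarrow> nat) \<Rightarrow> nat list \<Rightarrow> bool" where
  "is_branch T r p xs \<longleftrightarrow> set xs \<subseteq> T \<and>
     (\<forall>i. Suc i < length xs \<longrightarrow> xs ! Suc i \<noteq> r \<and> p (xs ! Suc i) = xs ! i)"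

definition last_born :: "nat set \<Rightarrow> nat \<Rightarrow> (nat \<Rightarrow> nat) \<Rightarrow> (nat \<Rightarrow> nat) \<Rightarrow> nat \<Rightarrow> bool" where
  "last_born T r p l v \<longleftrightarrow> v \<in> T \<and> v \<noteq> r \<and> l (p v) = v"

definition burling_tree ::
  "nat set \<Rightarrow> nat \<Rightarrow> (nat \<Rightarrow> nat) \<Rightarrow> (nat \<Rightarrow> nat) \<Rightarrow> (nat \<Rightarrow> nat set) \<Rightarrow> bool" where
  "burling_tree T r p l c \<longleftrightarrow> rooted_tree T r p \<and>
     (\<forall>v \<in> T. children T r p v \<noteq> {} \<longrightarrow> l v \<in> children T r p v) \<and>
     (\<forall>v \<in> T. (v = r \<or> last_born T r p l v) \<longrightarrow> c v = {}) \<and>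
     (\<forall>v \<in> T. v \<noteq> r \<and> \<not> last_born T r p l v \<longrightarrow>
        (\<exists>xs. is_branch T r p xs \<and> (xs = [] \<or> hd xs = l (p v)) \<and> c v = set xs))"

text \<open>G is a Burling graph: isomorphic to an induced subgraph of the underlying graph of the
  oriented graph fully derived from some Burling tree (arc uv iff v \<in> c u).\<close>
definition burling_graph :: "'a set \<Rightarrow> ('a \<Rightarrow> 'a \<Rightarrow> bool) \<Rightarrow> bool" where
  "burling_graph V E \<longleftrightarrow> (\<exists>T r p l c f. burling_tree T r p l c \<and> inj_on f V \<and> f ` V \<subseteq> T \<and>
     (\<forall>x \<in> V. \<forall>y \<in> V. E x y \<longleftrightarrow> (f y \<in> c (f x) \<or> f x \<in> c (f y))))"

end

theory Submission
  imports Defs "HOL-Number_Theory.Cong"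
begin

text \<open>Orient each edge of the graph fully derived from a Burling tree from \<open>u\<close> to \<open>v\<close> when
  \<open>v \<in> c u\<close>, say that \<open>v\<close> is below \<open>x\<close> when \<open>x\<close> is a proper ancestor of \<open>v\<close>, and rank
  vertices by depth. Then adjacent vertices are incomparable, the out-neighbours of a vertex lie on
  one branch and so form a chain, a neighbour \<open>b\<close> of a vertex \<open>a\<close> below \<open>x\<close> is below \<open>x\<close>
  itself unless it has arcs to both \<open>a\<close> and \<open>x\<close>, and the rank increases from the first to the
  second vertex of every directed path of length two. These properties pass to induced
  subgraphs, hence hold in every Burling graph.

  Consequently, being below \<open>x\<close> spreads along paths avoiding the neighbours of \<open>x\<close>, and every
  hole hangs from one of its vertices \<open>b\<close>: all its vertices non-adjacent to \<open>b\<close> are below \<open>b\<close>.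
  In a flower, let the central hole hang from \<open>b\<close> with neighbours \<open>x\<^sub>1\<close>, \<open>x\<^sub>2\<close>, and let
  the petals through \<open>b x\<^sub>1\<close> and \<open>b x\<^sub>2\<close> hang from \<open>t\<^sub>1\<close> and \<open>t\<^sub>2\<close>. Both lie outside
  the central hole, and spreading through the central hole and the petals shows that \<open>t\<^sub>2\<close> is
  below \<open>t\<^sub>1\<close> and \<open>t\<^sub>1\<close> below \<open>t\<^sub>2\<close>, which is absurd.\<close>

section \<open>Burling trees\<close>

definition depth :: "(nat \<Rightarrow> nat) \<Rightarrow> nat \<Rightarrow> nat \<Rightarrow> nat" where
  "depth p r v = (LEAST n. (p ^^ n) v = r)"

text \<open>The depth condition matters at the root, whose parent \<open>p r\<close> is unconstrained.\<close>

definition strictly_below :: "(nat \<Rightarrow> nat) \<Rightarrow> nat \<Rightarrow> nat \<Rightarrow> nat \<Rightarrow> bool" where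
  "strictly_below p r y z \<longleftrightarrow> (\<exists>j>0. (p ^^ j) y = z \<and> depth p r z + j = depth p r y)"

lemma strictly_below_irrefl: "\<not> strictly_below p r y y"
  unfolding strictly_below_def by auto

lemma strictly_below_trans:
  assumes "strictly_below p r x y" and "strictly_below p r y z"
  shows "strictly_below p r x z"
proof -
  obtain j k where "0 < j" "(p ^^ j) x = y" "depth p r y + j = depth p r x"
    and "(p ^^ k) y = z" "depth p r z + k = depth p r y"
    using assms unfolding strictly_below_def by blast
  then show ?thesis
    unfolding strictly_below_def by (intro exI[of _ "k + j"]) (auto simp: funpow_add)
qed

lemma depth_parent:
  assumes "(p ^^ n) v = r" and "v \<noteq> r"
  shows "depth p r v = Suc (depth p r (p v))"
  unfolding depth_def using assms
  by (subst Least_Suc[where n = n]) (auto simp: funpow_Suc_right simp del: funpow.simps)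

lemma funpow_eq_if_parent_eq:
  fixes p :: "'a \<Rightarrow> 'a"
  assumes "p y = p u" "0 < n"
  shows "(p ^^ n) y = (p ^^ n) u"
  using assms by (cases n) (simp_all add: funpow_swap1)

lemma branch_ancestor:
  assumes T: "rooted_tree T r p" and xs: "is_branch T r p xs" and "i \<le> k" "k < length xs"
  shows "(p ^^ (k - i)) (xs ! k) = xs ! i \<and> depth p r (xs ! k) = depth p r (xs ! i) + (k - i)"
  using \<open>i \<le> k\<close> \<open>k < length xs\<close>
proof (induction k rule: dec_induct)
  case base
  then show ?case by simp
next
  case (step n)
  then have "xs ! Suc n \<in> T" "xs ! Suc n \<noteq> r" and parent: "p (xs ! Suc n) = xs ! n"
    using xs unfolding is_branch_def by auto
  moreover from this obtain m where "(p ^^ m) (xs ! Suc n) = r"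
    using T unfolding rooted_tree_def by blast
  ultimately have "depth p r (xs ! Suc n) = Suc (depth p r (xs ! n))"
    using depth_parent by metis
  moreover have "(p ^^ (Suc n - i)) (xs ! Suc n) = (p ^^ (n - i)) (xs ! n)"
    using step.hyps parent by (simp add: Suc_diff_le funpow_Suc_right del: funpow.simps)
  ultimately show ?case using step by simp
qed

lemma branch_strictly_below:
  assumes "rooted_tree T r p" "is_branch T r p xs" "i < k" "k < length xs"
  shows "strictly_below p r (xs ! k) (xs ! i)"
  using branch_ancestor[OF assms(1,2), of i k] assms(3,4)
  unfolding strictly_below_def by (intro exI[of _ "k - i"]) simp

context
  fixes T :: "nat set" and r :: nat and p l :: "nat \<Rightarrow> nat" and c :: "nat \<Rightarrow> nat set"
  assumes bt: "burling_tree T r p l c"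
begin

lemma burling_tree_rooted: "rooted_tree T r p"
  using bt unfolding burling_tree_def by (elim conjE)

lemma burling_tree_last_born:
  assumes "v \<in> T" "children T r p v \<noteq> {}"
  shows "l v \<in> children T r p v"
proof -
  have "\<forall>v \<in> T. children T r p v \<noteq> {} \<longrightarrow> l v \<in> children T r p v"
    using bt unfolding burling_tree_def by (elim conjE)
  with assms show ?thesis by blast
qed

lemma burling_tree_no_out_arcs:
  assumes "v \<in> T" "v = r \<or> last_born T r p l v"
  shows "c v = {}"
proof -
  have "\<forall>v \<in> T. (v = r \<or> last_born T r p l v) \<longrightarrow> c v = {}"
    using bt unfolding burling_tree_def by (elim conjE)
  with assms show ?thesis by blast
qed

lemma burling_tree_out_arcs:
  assumes "v \<in> T" "v \<noteq> r" "\<not> last_born T r p l v"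
  obtains xs where "is_branch T r p xs" "xs = [] \<or> hd xs = l (p v)" "c v = set xs"
proof -
  have "\<forall>v \<in> T. v \<noteq> r \<and> \<not> last_born T r p l v \<longrightarrow>
      (\<exists>xs. is_branch T r p xs \<and> (xs = [] \<or> hd xs = l (p v)) \<and> c v = set xs)"
    using bt unfolding burling_tree_def by (elim conjE)
  with assms that show thesis by blast
qed

lemma burling_tree_depth_parent:
  assumes "v \<in> T" "v \<noteq> r"
  shows "depth p r v = Suc (depth p r (p v))"
proof -
  obtain n where "(p ^^ n) v = r" using burling_tree_rooted assms(1) unfolding rooted_tree_def by blast
  then show ?thesis using depth_parent assms(2) by blast
qed

lemma last_born_sibling:
  assumes "u \<in> T" "u \<noteq> r"
  shows "l (p u) \<in> T" "l (p u) \<noteq> r" "p (l (p u)) = p u"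
proof -
  have "p u \<in> T" using burling_tree_rooted assms unfolding rooted_tree_def by blast
  moreover have "u \<in> children T r p (p u)" using assms unfolding children_def by simp
  ultimately have "l (p u) \<in> children T r p (p u)" using burling_tree_last_born by blast
  then show "l (p u) \<in> T" "l (p u) \<noteq> r" "p (l (p u)) = p u"
    unfolding children_def by simp_all
qed

lemma depth_last_born:
  assumes "u \<in> T" "u \<noteq> r"
  shows "depth p r (l (p u)) = depth p r u"
  using burling_tree_depth_parent[OF last_born_sibling(1,2)[OF assms]]
    burling_tree_depth_parent[OF assms] last_born_sibling(3)[OF assms] by simp

lemma out_arc_source:
  assumes "u \<in> T" "v \<in> c u"
  shows "u \<noteq> r" "l (p u) \<noteq> u"
  using burling_tree_no_out_arcs[of u] assms unfolding last_born_def by auto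

lemma out_arcs_branch:
  assumes "u \<in> T" "v \<in> c u"
  obtains xs where "is_branch T r p xs" "xs ! 0 = l (p u)" "c u = set xs"
proof -
  have "\<not> last_born T r p l u" using out_arc_source[OF assms] unfolding last_born_def by blast
  then obtain xs where "is_branch T r p xs" "xs = [] \<or> hd xs = l (p u)" "c u = set xs"
    using burling_tree_out_arcs assms(1) out_arc_source(1)[OF assms] by blast
  moreover have "xs \<noteq> []" using calculation(3) assms(2) by auto
  ultimately show thesis using that by (simp add: hd_conv_nth)
qed

lemma arc_target_in_tree:
  assumes "u \<in> T" "v \<in> c u"
  shows "v \<in> T"
proof -
  obtain xs where "is_branch T r p xs" "c u = set xs" using out_arcs_branch assms by blast
  with assms(2) show ?thesis unfolding is_branch_def by blast
qed

lemma arc_depth: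
  assumes "u \<in> T" "v \<in> c u"
  obtains i where "(p ^^ i) v = l (p u)" "depth p r v = depth p r u + i"
proof -
  obtain xs where xs: "is_branch T r p xs" "xs ! 0 = l (p u)" "c u = set xs"
    using out_arcs_branch assms .
  obtain i where "i < length xs" "xs ! i = v" using xs(3) assms(2) by (auto simp: in_set_conv_nth)
  with branch_ancestor[OF burling_tree_rooted xs(1), of 0 i] have
    "(p ^^ i) v = l (p u)" "depth p r v = depth p r (l (p u)) + i"
    using xs(2) by simp_all
  moreover have "depth p r (l (p u)) = depth p r u"
    using depth_last_born out_arc_source(1) assms by blast
  ultimately show thesis using that by simp
qed

lemma arc_irrefl:
  assumes "u \<in> T"
  shows "u \<notin> c u"
proof
  assume "u \<in> c u"
  then obtain i where i: "(p ^^ i) u = l (p u)" "depth p r u = depth p r u + i"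
    using arc_depth assms by blast
  from i(2) have "(p ^^ i) u = u" by simp
  with i(1)[symmetric] have "l (p u) = u" by (rule trans)
  with out_arc_source(2)[OF assms \<open>u \<in> c u\<close>] show False ..
qed

lemma arc_incomparable_tree:
  assumes "u \<in> T" "v \<in> c u"
  shows "\<not> strictly_below p r u v \<and> \<not> strictly_below p r v u"
proof -
  obtain i where i: "(p ^^ i) v = l (p u)" "depth p r v = depth p r u + i"
    using arc_depth assms .
  have "\<not> strictly_below p r u v"
  proof
    assume "strictly_below p r u v"
    then obtain j where "0 < j" "depth p r v + j = depth p r u"
      unfolding strictly_below_def by blast
    with i(2) show False by simp
  qed
  moreover have "\<not> strictly_below p r v u"
  proof
    assume "strictly_below p r v u"
    then obtain j where j: "(p ^^ j) v = u" "depth p r u + j = depth p r v"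
      unfolding strictly_below_def by blast
    with i(2) have "(p ^^ i) v = u" by simp
    with i(1)[symmetric] have "l (p u) = u" by (rule trans)
    with out_arc_source(2)[OF assms] show False ..
  qed
  ultimately show ?thesis ..
qed

lemma out_arcs_comparable_tree:
  assumes "u \<in> T" "v \<in> c u" "w \<in> c u" "v \<noteq> w"
  shows "strictly_below p r v w \<or> strictly_below p r w v"
proof -
  obtain xs where xs: "is_branch T r p xs" "xs ! 0 = l (p u)" "c u = set xs"
    using out_arcs_branch assms(1,2) .
  obtain i k where ik: "i < length xs" "xs ! i = v" "k < length xs" "xs ! k = w"
    using xs(3) assms(2,3) by (auto simp: in_set_conv_nth)
  with assms(4) have "i \<noteq> k" by blast
  then have "i < k \<or> k < i" by arith
  then show ?thesis
  proof
    assume "i < k"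
    from branch_strictly_below[OF burling_tree_rooted xs(1) this ik(3)] ik(2,4) show ?thesis by simp
  next
    assume "k < i"
    from branch_strictly_below[OF burling_tree_rooted xs(1) this ik(1)] ik(2,4) show ?thesis by simp
  qed
qed

lemma arc_target_below_ancestor:
  assumes "a \<in> T" "b \<in> c a" "strictly_below p r a x"
  shows "strictly_below p r b x"
proof -
  obtain j where j: "0 < j" "(p ^^ j) a = x" "depth p r x + j = depth p r a"
    using assms(3) unfolding strictly_below_def by blast
  obtain i where i: "(p ^^ i) b = l (p a)" "depth p r b = depth p r a + i"
    using arc_depth assms(1,2) .
  have "p (l (p a)) = p a" using last_born_sibling(3) out_arc_source(1) assms(1,2) by blast
  from funpow_eq_if_parent_eq[of p "l (p a)" a, OF this j(1)] j(2)
  have "(p ^^ j) (l (p a)) = x" by simp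
  then have "(p ^^ (j + i)) b = x" using i by (simp add: funpow_add)
  then show ?thesis using i j unfolding strictly_below_def by (intro exI[of _ "j + i"]) auto
qed

lemma arc_branch_contains_ancestor:
  assumes b: "b \<in> T" and "a \<in> c b" "strictly_below p r a x" and bx: "\<not> strictly_below p r b x"
  shows "x \<in> c b"
proof -
  obtain j where j: "0 < j" "(p ^^ j) a = x" "depth p r x + j = depth p r a"
    using assms(3) unfolding strictly_below_def by blast
  obtain xs where xs: "is_branch T r p xs" "xs ! 0 = l (p b)" "c b = set xs"
    using out_arcs_branch b \<open>a \<in> c b\<close> .
  obtain k where k: "k < length xs" "xs ! k = a"
    using xs(3) \<open>a \<in> c b\<close> by (auto simp: in_set_conv_nth)
  show ?thesis
  proof (cases "j \<le> k")
    case True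
    then have "x = xs ! (k - j)"
      using branch_ancestor[OF burling_tree_rooted xs(1), of "k - j" k] k j(2) by simp
    then show ?thesis using xs(3) k(1) by simp
  next
    case False
    have "b \<noteq> r" using out_arc_source b \<open>a \<in> c b\<close> by blast
    have anc: "(p ^^ k) a = l (p b)" "depth p r a = depth p r b + k"
      using branch_ancestor[OF burling_tree_rooted xs(1), of 0 k] k xs(2)
        depth_last_born[OF b \<open>b \<noteq> r\<close>] by simp_all
    have "x = (p ^^ (j - k + k)) a" using j(2) False by simp
    also have "\<dots> = (p ^^ (j - k)) ((p ^^ k) a)" by (simp add: funpow_add)
    also have "\<dots> = (p ^^ (j - k)) b"
      using anc(1) funpow_eq_if_parent_eq[of p "l (p b)" b, OF last_born_sibling(3)[OF b \<open>b \<noteq> r\<close>]]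
        False by simp
    finally have "strictly_below p r b x"
      using j(3) anc(2) False unfolding strictly_below_def by (intro exI[of _ "j - k"]) auto
    with bx show ?thesis ..
  qed
qed

lemma below_edge_arcs_tree:
  assumes "a \<in> T" "b \<in> T" "strictly_below p r a x" "b \<in> c a \<or> a \<in> c b"
    and "\<not> strictly_below p r b x"
  shows "a \<in> c b \<and> x \<in> c b"
  using arc_target_below_ancestor[OF assms(1) _ assms(3)]
    arc_branch_contains_ancestor[OF assms(2) _ assms(3,5)] assms(4,5) by blast

lemma arc_path_depth_less:
  assumes "w \<in> T" "u \<in> c w" "v \<in> c u"
  shows "depth p r w < depth p r u"
proof -
  obtain i where i: "(p ^^ i) u = l (p w)" "depth p r u = depth p r w + i"
    using arc_depth assms(1,2) .
  have "u \<in> T" using arc_target_in_tree assms(1,2) .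
  have "i \<noteq> 0"
  proof
    assume "i = 0"
    then have "l (p u) = u"
      using i(1) last_born_sibling(3) out_arc_source(1) assms(1,2) by fastforce
    with out_arc_source(2)[OF \<open>u \<in> T\<close> assms(3)] show False ..
  qed
  with i(2) show ?thesis by simp
qed

end

section \<open>Holes as cyclic lists\<close>

definition hole_list :: "('a \<Rightarrow> 'a \<Rightarrow> bool) \<Rightarrow> 'a list \<Rightarrow> bool" where
  "hole_list E vs \<longleftrightarrow> distinct vs \<and> 4 \<le> length vs \<and>
     (\<forall>i < length vs. \<forall>j < length vs.
        E (vs ! i) (vs ! j) \<longleftrightarrow> (j = Suc i mod length vs \<or> i = Suc j mod length vs))"

lemma is_hole_iff: "is_hole V E C \<longleftrightarrow> C \<subseteq> V \<and> (\<exists>vs. hole_list E vs \<and> set vs = C)"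
  unfolding is_hole_def hole_list_def by blast

lemma hole_list_adj:
  "hole_list E vs \<Longrightarrow> i < length vs \<Longrightarrow> j < length vs \<Longrightarrow>
    E (vs ! i) (vs ! j) \<longleftrightarrow> (j = Suc i mod length vs \<or> i = Suc j mod length vs)"
  unfolding hole_list_def by blast

lemma hole_list_length: "hole_list E vs \<Longrightarrow> 4 \<le> length vs"
  unfolding hole_list_def by blast

lemma hole_list_nth_eq_iff:
  "hole_list E vs \<Longrightarrow> i < length vs \<Longrightarrow> j < length vs \<Longrightarrow> vs ! i = vs ! j \<longleftrightarrow> i = j"
  unfolding hole_list_def by (simp add: nth_eq_iff_index_eq)

lemma hole_list_consec: "hole_list E vs \<Longrightarrow> Suc j < length vs \<Longrightarrow> E (vs ! j) (vs ! Suc j)"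
  using hole_list_adj[of E vs j "Suc j"] by simp

lemma hole_list_head_adj:
  assumes "hole_list E vs" "j < length vs"
  shows "E (vs ! 0) (vs ! j) \<longleftrightarrow> j = 1 \<or> j = length vs - 1"
proof -
  have "4 \<le> length vs" using hole_list_length assms(1) .
  moreover have "0 = Suc j mod length vs \<longleftrightarrow> j = length vs - 1"
    using assms(2) by (cases "Suc j = length vs") auto
  moreover have "vs \<noteq> []" "Suc 0 mod length vs = 1" using calculation(1) by auto
  ultimately show ?thesis
    using hole_list_adj[OF assms(1), of 0 j] assms(2) by simp
qed

lemma hole_list_rotate:
  assumes "hole_list E vs"
  shows "hole_list E (rotate k vs)"
proof -
  let ?m = "length vs"
  have "0 < ?m" using hole_list_length[OF assms] by linarith
  have shift: "(k + j) mod ?m = Suc ((k + i) mod ?m) mod ?m \<longleftrightarrow> j = Suc i mod ?m"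
    if "j < ?m" for i j
    using cong_add_lcancel_nat[of k j "Suc i" ?m] that by (simp add: cong_def mod_Suc_eq)
  have "E (rotate k vs ! i) (rotate k vs ! j) \<longleftrightarrow> (j = Suc i mod ?m \<or> i = Suc j mod ?m)"
    if "i < ?m" "j < ?m" for i j
    using hole_list_adj[OF assms, of "(k + i) mod ?m" "(k + j) mod ?m"] shift[of j i] shift[of i j]
      \<open>0 < ?m\<close> that by (simp add: nth_rotate)
  then show ?thesis using assms unfolding hole_list_def by simp
qed

lemma hole_at_head:
  assumes "is_hole V E C" "x \<in> C"
  obtains vs where "hole_list E vs" "set vs = C" "vs ! 0 = x"
proof -
  obtain ws where ws: "hole_list E ws" "set ws = C" using assms(1) unfolding is_hole_iff by blast
  obtain q where q: "q < length ws" "ws ! q = x" using ws(2) assms(2) by (auto simp: in_set_conv_nth)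
  show thesis
  proof (rule that)
    show "hole_list E (rotate q ws)" using hole_list_rotate ws(1) .
    show "set (rotate q ws) = C" using ws(2) by simp
    show "rotate q ws ! 0 = x" using q nth_rotate[of 0 ws q] by (cases ws) auto
  qed
qed

lemma hole_list_head_neighbour:
  assumes "hole_list E vs" "y \<in> set vs"
  shows "E (vs ! 0) y \<longleftrightarrow> y = vs ! 1 \<or> y = vs ! (length vs - 1)"
proof -
  obtain j where j: "j < length vs" "vs ! j = y" using assms(2) by (auto simp: in_set_conv_nth)
  have "4 \<le> length vs" using hole_list_length assms(1) .
  then have "vs ! j = vs ! 1 \<longleftrightarrow> j = 1" "vs ! j = vs ! (length vs - 1) \<longleftrightarrow> j = length vs - 1"
    using hole_list_nth_eq_iff[OF assms(1)] j(1) by simp_all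
  with hole_list_head_adj[OF assms(1) j(1)] j(2) show ?thesis by simp
qed

lemma hole_other_neighbour:
  assumes "is_hole V E C" "x \<in> C"
  obtains y where "y \<in> C" "y \<noteq> w" "E x y"
proof -
  obtain vs where vs: "hole_list E vs" "set vs = C" "vs ! 0 = x" using hole_at_head assms .
  let ?m = "length vs"
  have "4 \<le> ?m" using hole_list_length vs(1) .
  then have "vs ! 1 \<in> C" "vs ! (?m - 1) \<in> C" "vs ! 1 \<noteq> vs ! (?m - 1)"
    using vs(2) hole_list_nth_eq_iff[OF vs(1), of 1 "?m - 1"] by auto
  moreover have "E x (vs ! 1)" "E x (vs ! (?m - 1))"
    using hole_list_head_neighbour[OF vs(1)] vs calculation(1,2) by simp_all
  ultimately show thesis using that by metis
qed

lemma hole_triangle_free: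
  assumes "is_hole V E C" "x \<in> C" "y \<in> C" "z \<in> C" "E x y" "E x z" "y \<noteq> z"
  shows "\<not> E y z"
proof -
  obtain vs where vs: "hole_list E vs" "set vs = C" "vs ! 0 = x" using hole_at_head assms(1,2) .
  let ?m = "length vs"
  have "4 \<le> ?m" using hole_list_length vs(1) .
  have "y = vs ! 1 \<or> y = vs ! (?m - 1)" "z = vs ! 1 \<or> z = vs ! (?m - 1)"
    using hole_list_head_neighbour[OF vs(1)] vs(2,3) assms(3-6) by simp_all
  moreover have "Suc (?m - 1) = ?m" "1 < ?m" "?m - 1 < ?m" using \<open>4 \<le> ?m\<close> by auto
  then have "\<not> E (vs ! 1) (vs ! (?m - 1))" "\<not> E (vs ! (?m - 1)) (vs ! 1)"
    using hole_list_adj[OF vs(1), of 1 "?m - 1"] hole_list_adj[OF vs(1), of "?m - 1" 1]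
      \<open>4 \<le> ?m\<close> by auto
  ultimately show ?thesis using assms(7) by auto
qed

section \<open>Abstract Burling graphs\<close>

locale abstract_burling =
  fixes V :: "'a set" and E :: "'a \<Rightarrow> 'a \<Rightarrow> bool"
    and arc :: "'a \<Rightarrow> 'a \<Rightarrow> bool" and below :: "'a \<Rightarrow> 'a \<Rightarrow> bool" and rank :: "'a \<Rightarrow> nat"
  assumes graph: "sgraph V E"
    and edge_iff_arc: "x \<in> V \<Longrightarrow> y \<in> V \<Longrightarrow> E x y \<longleftrightarrow> arc x y \<or> arc y x"
    and below_irrefl: "x \<in> V \<Longrightarrow> \<not> below x x"
    and below_trans: "x \<in> V \<Longrightarrow> y \<in> V \<Longrightarrow> z \<in> V \<Longrightarrow> below x y \<Longrightarrow> below y z \<Longrightarrow> below x z"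
    and arc_incomparable: "u \<in> V \<Longrightarrow> v \<in> V \<Longrightarrow> arc u v \<Longrightarrow> \<not> below u v \<and> \<not> below v u"
    and out_arcs_comparable:
      "u \<in> V \<Longrightarrow> v \<in> V \<Longrightarrow> w \<in> V \<Longrightarrow> arc u v \<Longrightarrow> arc u w \<Longrightarrow> v \<noteq> w \<Longrightarrow>
        below v w \<or> below w v"
    and below_edge_arcs:
      "a \<in> V \<Longrightarrow> x \<in> V \<Longrightarrow> b \<in> V \<Longrightarrow> below a x \<Longrightarrow> E a b \<Longrightarrow> \<not> below b x \<Longrightarrow>
        arc b a \<and> arc b x"
    and arc_path_rank: "w \<in> V \<Longrightarrow> u \<in> V \<Longrightarrow> v \<in> V \<Longrightarrow> arc w u \<Longrightarrow> arc u v \<Longrightarrow> rank w < rank u"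
begin

lemma edge_in_V: "E x y \<Longrightarrow> x \<in> V \<and> y \<in> V"
  using graph unfolding sgraph_def by blast

lemma edge_sym: "E x y \<Longrightarrow> E y x"
  using graph unfolding sgraph_def by blast

lemma edge_irrefl: "E x y \<Longrightarrow> x \<noteq> y"
  using graph unfolding sgraph_def by blast

lemma adjacent_not_below: "E x y \<Longrightarrow> \<not> below x y"
  using edge_in_V[of x y] edge_iff_arc[of x y] arc_incomparable[of x y] arc_incomparable[of y x]
  by blast

lemma arc_asym:
  assumes "x \<in> V" "y \<in> V" "arc x y"
  shows "\<not> arc y x"
proof
  assume "arc y x"
  with assms have "rank x < rank y" "rank y < rank x"
    using arc_path_rank[of x y x] arc_path_rank[of y x y] by simp_all
  then show False by simp
qed

lemma below_step:
  assumes "below a x" "E a b" "\<not> E b x" "x \<in> V"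
  shows "below b x"
proof (rule ccontr)
  assume "\<not> below b x"
  have "a \<in> V" "b \<in> V" using edge_in_V[OF assms(2)] by simp_all
  with assms \<open>\<not> below b x\<close> have "arc b x" using below_edge_arcs[of a x b] by simp
  with assms(3,4) \<open>b \<in> V\<close> show False using edge_iff_arc[of b x] by simp
qed

lemma induced_subgraph:
  assumes "sgraph W F" "inj_on f W" and fV: "\<And>x. x \<in> W \<Longrightarrow> f x \<in> V"
    and adj: "\<And>x y. x \<in> W \<Longrightarrow> y \<in> W \<Longrightarrow> F x y \<longleftrightarrow> E (f x) (f y)"
  shows "abstract_burling W F (\<lambda>x y. arc (f x) (f y)) (\<lambda>x y. below (f x) (f y)) (\<lambda>x. rank (f x))"
proof unfold_locales
  show "sgraph W F" by fact
next
  fix x y assume "x \<in> W" "y \<in> W"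
  then show "F x y \<longleftrightarrow> arc (f x) (f y) \<or> arc (f y) (f x)"
    using adj edge_iff_arc fV by simp
next
  fix x assume "x \<in> W"
  then show "\<not> below (f x) (f x)" using below_irrefl fV by simp
next
  fix x y z assume "x \<in> W" "y \<in> W" "z \<in> W" "below (f x) (f y)" "below (f y) (f z)"
  then show "below (f x) (f z)" using below_trans[of "f x" "f y" "f z"] fV by simp
next
  fix u v assume "u \<in> W" "v \<in> W" "arc (f u) (f v)"
  then show "\<not> below (f u) (f v) \<and> \<not> below (f v) (f u)"
    using arc_incomparable[of "f u" "f v"] fV by simp
next
  fix u v w assume "u \<in> W" "v \<in> W" "w \<in> W" "arc (f u) (f v)" "arc (f u) (f w)" "v \<noteq> w"
  moreover have "f v \<noteq> f w" using \<open>inj_on f W\<close> calculation(2,3,6) by (simp add: inj_on_eq_iff)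
  ultimately show "below (f v) (f w) \<or> below (f w) (f v)"
    using out_arcs_comparable[of "f u" "f v" "f w"] fV by simp
next
  fix a x b assume "a \<in> W" "x \<in> W" "b \<in> W" "below (f a) (f x)" "F a b" "\<not> below (f b) (f x)"
  then show "arc (f b) (f a) \<and> arc (f b) (f x)"
    using below_edge_arcs[of "f a" "f x" "f b"] adj fV by simp
next
  fix w u v assume "w \<in> W" "u \<in> W" "v \<in> W" "arc (f w) (f u)" "arc (f u) (f v)"
  then show "rank (f w) < rank (f u)" using arc_path_rank[of "f w" "f u" "f v"] fV by simp
qed

end

lemma burling_tree_abstract_burling:
  assumes bt: "burling_tree T r p l c"
  shows "abstract_burling T (\<lambda>u v. u \<in> T \<and> v \<in> T \<and> (v \<in> c u \<or> u \<in> c v))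
    (\<lambda>u v. v \<in> c u) (strictly_below p r) (depth p r)"
proof unfold_locales
  show "sgraph T (\<lambda>u v. u \<in> T \<and> v \<in> T \<and> (v \<in> c u \<or> u \<in> c v))"
    using burling_tree_rooted[OF bt] arc_irrefl[OF bt] unfolding sgraph_def rooted_tree_def by blast
next
  fix x y z assume "strictly_below p r x y" "strictly_below p r y z"
  then show "strictly_below p r x z" by (rule strictly_below_trans)
next
  fix u v w assume "u \<in> T" "v \<in> c u" "w \<in> c u" "v \<noteq> w"
  then show "strictly_below p r v w \<or> strictly_below p r w v"
    by (rule out_arcs_comparable_tree[OF bt])
next
  fix a x b assume "a \<in> T" "b \<in> T" "strictly_below p r a x"
    "a \<in> T \<and> b \<in> T \<and> (b \<in> c a \<or> a \<in> c b)" "\<not> strictly_below p r b x"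
  then show "a \<in> c b \<and> x \<in> c b" using below_edge_arcs_tree[OF bt] by blast
qed (simp_all add: strictly_below_irrefl arc_incomparable_tree[OF bt] arc_path_depth_less[OF bt])

context abstract_burling
begin

lemma hole_subset: "is_hole V E C \<Longrightarrow> C \<subseteq> V"
  unfolding is_hole_def by blast

lemma below_along_path:
  assumes path: "\<And>n. lo \<le> n \<Longrightarrow> n < hi \<Longrightarrow> E (ws ! n) (ws ! Suc n)"
    and start: "lo \<le> q" "q \<le> hi" "below (ws ! q) x" and "x \<in> V"
    and far: "\<And>n. lo \<le> n \<Longrightarrow> n \<le> hi \<Longrightarrow> n \<noteq> q \<Longrightarrow> \<not> E (ws ! n) x"
    and "lo \<le> j" "j \<le> hi"
  shows "below (ws ! j) x"
proof -
  have step: "below (ws ! n) x \<longleftrightarrow> below (ws ! Suc n) x" if "lo \<le> n" "n < hi" for n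
  proof
    have e: "E (ws ! n) (ws ! Suc n)" using path that .
    assume "below (ws ! n) x"
    then show "below (ws ! Suc n) x"
      using below_step[OF _ e _ \<open>x \<in> V\<close>] far[of "Suc n"] start(3) that by (cases "Suc n = q") auto
  next
    have e: "E (ws ! Suc n) (ws ! n)" using edge_sym path that by blast
    assume "below (ws ! Suc n) x"
    then show "below (ws ! n) x"
      using below_step[OF _ e _ \<open>x \<in> V\<close>] far[of n] start(3) that by (cases "n = q") auto
  qed
  show ?thesis
  proof (cases "q \<le> j")
    case True
    then show ?thesis
      using \<open>j \<le> hi\<close> by (induction j rule: dec_induct) (use start step in auto)
  next
    case False
    then have "j \<le> q" by simp
    then show ?thesis
      using \<open>lo \<le> j\<close> by (induction j rule: inc_induct) (use start step in auto)
  qed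
qed

lemma below_spreads_in_hole:
  assumes C: "is_hole V E C" and "w \<in> C" "z \<in> C" "z \<noteq> w" "below z x" "x \<in> V"
    and far: "\<And>v. v \<in> C \<Longrightarrow> v \<noteq> w \<Longrightarrow> v \<noteq> z \<Longrightarrow> \<not> E v x"
    and "y \<in> C" "y \<noteq> w"
  shows "below y x"
proof -
  obtain vs where vs: "hole_list E vs" "set vs = C" "vs ! 0 = w" using hole_at_head C \<open>w \<in> C\<close> .
  let ?m = "length vs"
  have index: "\<exists>j. 1 \<le> j \<and> j \<le> ?m - 1 \<and> vs ! j = v" if v: "v \<in> C" "v \<noteq> w" for v
  proof -
    obtain j where "j < ?m" "vs ! j = v" using v(1) vs(2) by (auto simp: in_set_conv_nth)
    moreover have "j \<noteq> 0" using calculation(2) v(2) vs(3) by (cases j) auto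
    ultimately show ?thesis by (intro exI[of _ j]) auto
  qed
  obtain q where q: "1 \<le> q" "q \<le> ?m - 1" "vs ! q = z" using index assms(3,4) by blast
  obtain j where j: "1 \<le> j" "j \<le> ?m - 1" "vs ! j = y" using index assms(8,9) by blast
  have "below (vs ! j) x"
  proof (rule below_along_path[of 1 "?m - 1" vs q x])
    show "E (vs ! n) (vs ! Suc n)" if "1 \<le> n" "n < ?m - 1" for n
      using hole_list_consec[OF vs(1)] that by simp
    show "\<not> E (vs ! n) x" if "1 \<le> n" "n \<le> ?m - 1" "n \<noteq> q" for n
    proof -
      have "n < ?m" "q < ?m" "vs \<noteq> []" using that q hole_list_length[OF vs(1)] by auto
      then have "vs ! n \<noteq> vs ! 0" "vs ! n \<noteq> vs ! q"
        using hole_list_nth_eq_iff[OF vs(1), of n 0] hole_list_nth_eq_iff[OF vs(1), of n q]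
          that(1,3) by auto
      moreover have "vs ! n \<in> C" using \<open>n < ?m\<close> vs(2) by auto
      ultimately show ?thesis using far vs(3) q(3) by blast
    qed
  qed (use q j assms(5,6) in auto)
  with j(3) show ?thesis by simp
qed

definition hangs_from :: "'a set \<Rightarrow> 'a \<Rightarrow> bool" where
  "hangs_from C b \<longleftrightarrow> b \<in> C \<and> (\<forall>y \<in> C. y \<noteq> b \<longrightarrow> \<not> E y b \<longrightarrow> below y b)"

lemma hangs_from_mem: "hangs_from C b \<Longrightarrow> b \<in> C"
  unfolding hangs_from_def by blast

lemma hangs_fromD: "hangs_from C b \<Longrightarrow> y \<in> C \<Longrightarrow> y \<noteq> b \<Longrightarrow> \<not> E y b \<Longrightarrow> below y b"
  unfolding hangs_from_def by blast

lemma hangs_from_if_below: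
  assumes C: "is_hole V E C" and "b \<in> C" "z \<in> C" "z \<noteq> b" "\<not> E z b" "below z b"
  shows "hangs_from C b"
proof -
  obtain vs where vs: "hole_list E vs" "set vs = C" "vs ! 0 = b" using hole_at_head C \<open>b \<in> C\<close> .
  let ?m = "length vs"
  have "4 \<le> ?m" using hole_list_length vs(1) .
  have index: "\<exists>j. 2 \<le> j \<and> j \<le> ?m - 2 \<and> vs ! j = v" if v: "v \<in> C" "v \<noteq> b" "\<not> E v b" for v
  proof -
    obtain j where j: "j < ?m" "vs ! j = v" using v(1) vs(2) by (auto simp: in_set_conv_nth)
    moreover have "j \<noteq> 0" using j(2) v(2) vs(3) by (cases j) auto
    moreover have "\<not> E (vs ! 0) (vs ! j)" using v(3) j(2) vs(3) edge_sym by blast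
    then have "j \<noteq> 1" "j \<noteq> ?m - 1" using hole_list_head_adj[OF vs(1) j(1)] by simp_all
    ultimately show ?thesis by (intro exI[of _ j]) auto
  qed
  obtain q where q: "2 \<le> q" "q \<le> ?m - 2" "vs ! q = z" using index assms(3-5) by blast
  have "below y b" if y: "y \<in> C" "y \<noteq> b" "\<not> E y b" for y
  proof -
    obtain j where j: "2 \<le> j" "j \<le> ?m - 2" "vs ! j = y" using index y by blast
    have "below (vs ! j) b"
    proof (rule below_along_path[of 2 "?m - 2" vs q b])
      show "E (vs ! n) (vs ! Suc n)" if "2 \<le> n" "n < ?m - 2" for n
        using hole_list_consec[OF vs(1)] that by simp
      show "\<not> E (vs ! n) b" if "2 \<le> n" "n \<le> ?m - 2" "n \<noteq> q" for n
      proof -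
        have "\<not> E (vs ! 0) (vs ! n)"
          using hole_list_head_adj[OF vs(1), of n] that \<open>4 \<le> ?m\<close> by simp
        then show ?thesis using edge_sym[of "vs ! n" "vs ! 0"] vs(3) by blast
      qed
      show "b \<in> V" using hole_subset C \<open>b \<in> C\<close> by blast
    qed (use q j assms(6) in auto)
    with j(3) show ?thesis by simp
  qed
  with \<open>b \<in> C\<close> show ?thesis unfolding hangs_from_def by blast
qed

text \<open>A vertex of least rank among those with an arc inside the hole has arcs to both of its
  neighbours in the hole: an arc entering it would come from a vertex of smaller rank.\<close>

lemma hole_has_source:
  assumes C: "is_hole V E C"
  obtains s y z where "s \<in> C" "y \<in> C" "z \<in> C" "y \<noteq> z" "arc s y" "arc s z"
proof -
  let ?S = "{s \<in> C. \<exists>y \<in> C. arc s y}"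
  have CV: "C \<subseteq> V" using hole_subset C .
  obtain vs where vs: "hole_list E vs" "set vs = C" using C unfolding is_hole_iff by blast
  then have "0 < length vs" using hole_list_length[OF vs(1)] by linarith
  with vs(2) have "vs ! 0 \<in> C" using nth_mem by blast
  moreover obtain y where "y \<in> C" "E (vs ! 0) y"
    using hole_other_neighbour[OF C \<open>vs ! 0 \<in> C\<close>] by blast
  ultimately have "vs ! 0 \<in> ?S \<or> y \<in> ?S" using edge_iff_arc CV by blast
  then obtain s where s: "s \<in> ?S" and least: "\<And>t. t \<in> ?S \<Longrightarrow> rank s \<le> rank t"
    using ex_has_least_nat[of "\<lambda>t. t \<in> ?S" _ rank] by blast
  then obtain y where y: "y \<in> C" "arc s y" by blast
  obtain z where z: "z \<in> C" "z \<noteq> y" "E s z" using hole_other_neighbour[OF C] s by blast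
  have "arc s z"
  proof (rule ccontr)
    assume "\<not> arc s z"
    then have "arc z s" using edge_iff_arc z s CV by blast
    then have "rank z < rank s" using arc_path_rank[of z s y] y z s CV by blast
    moreover have "z \<in> ?S" using \<open>arc z s\<close> z s by blast
    ultimately show False using least by fastforce
  qed
  with s y z that show thesis by blast
qed

lemma hole_hangs:
  assumes C: "is_hole V E C"
  obtains b where "hangs_from C b"
proof -
  obtain s y z where s: "s \<in> C" "y \<in> C" "z \<in> C" "y \<noteq> z" "arc s y" "arc s z"
    using hole_has_source C .
  have CV: "C \<subseteq> V" using hole_subset C .
  have "E s y" "E s z" using s edge_iff_arc CV by blast+
  then have "\<not> E y z" "\<not> E z y"
    using hole_triangle_free[OF C s(1,2,3)] hole_triangle_free[OF C s(1,3,2)] s(4) by blast+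
  from out_arcs_comparable[of s y z] s CV have "below y z \<or> below z y" by blast
  then show thesis
  proof
    assume "below y z"
    with hangs_from_if_below[OF C s(3,2,4) \<open>\<not> E y z\<close>] that show thesis by blast
  next
    assume "below z y"
    with hangs_from_if_below[OF C s(2,3) s(4)[symmetric] \<open>\<not> E z y\<close>] that show thesis by blast
  qed
qed

lemma hangs_from_arcs:
  assumes C: "is_hole V E C" and hangs: "hangs_from C b"
    and "x \<in> C" "y \<in> C" "E b x" "E x y" "y \<noteq> b"
  shows "arc x b" "arc x y" "below y b" "\<not> E y b"
proof -
  have "b \<in> C" using hangs_from_mem hangs .
  have "\<not> E b y"
    using hole_triangle_free[OF C \<open>x \<in> C\<close> \<open>b \<in> C\<close> \<open>y \<in> C\<close> edge_sym[OF assms(5)] assms(6)]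
      assms(7) by blast
  then show "\<not> E y b" using edge_sym by blast
  then show "below y b" using hangs_fromD[OF hangs assms(4,7)] by blast
  moreover have "\<not> below x b" using adjacent_not_below[OF edge_sym[OF assms(5)]] .
  moreover have "x \<in> V" "y \<in> V" "b \<in> V" using hole_subset[OF C] assms(3,4) \<open>b \<in> C\<close> by blast+
  ultimately have "arc x y \<and> arc x b"
    using below_edge_arcs[of y b x] edge_sym[OF assms(6)] by blast
  then show "arc x b" "arc x y" by simp_all
qed

lemma hangs_from_edge_below:
  assumes C: "is_hole V E C" and hangs: "hangs_from C t"
    and "b \<in> C" "x \<in> C" "E b x" "b \<noteq> t" "x \<noteq> t"
  shows "below b t \<or> below x t"
proof (rule ccontr)
  assume "\<not> (below b t \<or> below x t)"
  then have "E t b" "E t x" using hangs_fromD[OF hangs] assms(3,4,6,7) edge_sym by blast+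
  with hole_triangle_free[OF C hangs_from_mem[OF hangs] assms(3,4)] assms(5) edge_irrefl
  show False by blast
qed

text \<open>Being below \<open>z\<close> would spread from \<open>y\<close> through \<open>C\<close> up to \<open>b\<close>, which is above \<open>z\<close>.\<close>

lemma not_below_if_far_in_hole:
  assumes C: "is_hole V E C" and "b \<in> C" "x \<in> C" "y \<in> C" "b \<noteq> x" "y \<noteq> x"
    and "below z b" "z \<in> V"
    and far: "\<And>v. v \<in> C \<Longrightarrow> v \<noteq> x \<Longrightarrow> v \<noteq> y \<Longrightarrow> \<not> E v z"
  shows "\<not> below y z"
proof
  assume "below y z"
  have "below b z" using below_spreads_in_hole[OF C assms(3,4,6) \<open>below y z\<close> assms(8) far assms(2,5)] .
  moreover have "b \<in> V" using hole_subset C assms(2) by blast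
  ultimately show False using below_trans[of b z b] below_irrefl[of b] assms(7,8) by blast
qed

end

section \<open>Flowers\<close>

locale burling_flower = abstract_burling +
  fixes H :: "'a set" and Hf :: "'a set \<Rightarrow> 'a set"
  assumes hole: "is_hole V E H"
    and petal: "e \<in> induced_edges E H \<Longrightarrow> is_hole V E (Hf e) \<and> e \<subseteq> Hf e \<and> H \<inter> Hf e = e"
    and petals_meet:
      "e \<in> induced_edges E H \<Longrightarrow> e' \<in> induced_edges E H \<Longrightarrow> e \<noteq> e' \<Longrightarrow> Hf e \<inter> Hf e' = e \<inter> e'"
    and edge_in_petal: "E x y \<Longrightarrow> \<exists>e \<in> induced_edges E H. {x, y} \<in> induced_edges E (Hf e)"
begin

lemma hole_edge: "b \<in> H \<Longrightarrow> x \<in> H \<Longrightarrow> E b x \<Longrightarrow> {b, x} \<in> induced_edges E H"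
  unfolding induced_edges_def by blast

lemma edge_petal:
  assumes "b \<in> H" "x \<in> H" "E b x"
  shows "is_hole V E (Hf {b, x})" "b \<in> Hf {b, x}" "x \<in> Hf {b, x}" "H \<inter> Hf {b, x} = {b, x}"
  using petal[OF hole_edge[OF assms]] by auto

lemma petal_neighbour:
  assumes e: "e \<in> induced_edges E H" and "w \<in> Hf e" "w \<notin> H" "E w z"
  shows "z \<in> Hf e"
proof -
  obtain e' where e': "e' \<in> induced_edges E H" "{w, z} \<in> induced_edges E (Hf e')"
    using edge_in_petal \<open>E w z\<close> by blast
  then have "w \<in> Hf e'" "z \<in> Hf e'" unfolding induced_edges_def by (auto simp: doubleton_eq_iff)
  moreover have "e \<subseteq> H" using e unfolding induced_edges_def by blast
  ultimately show ?thesis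
    using petals_meet[OF e e'(1)] \<open>w \<in> Hf e\<close> \<open>w \<notin> H\<close> by (cases "e = e'") auto
qed

lemma petal_not_hangs_from_top_neighbour:
  assumes hangs: "hangs_from H b" and x: "x \<in> H" "E b x"
  shows "\<not> hangs_from (Hf {b, x}) x"
proof
  assume top: "hangs_from (Hf {b, x}) x"
  have "b \<in> H" using hangs_from_mem hangs .
  note P = edge_petal[OF \<open>b \<in> H\<close> x]
  obtain h where "h \<in> H" "h \<noteq> b" "E x h" using hole_other_neighbour[OF hole x(1)] by blast
  then have "arc x b" using hangs_from_arcs(1)[OF hole hangs x(1)] x(2) by blast
  obtain y where "y \<in> Hf {b, x}" "y \<noteq> x" "E b y" using hole_other_neighbour[OF P(1,2)] by blast
  then have "arc b x" using hangs_from_arcs(1)[OF P(1) top P(2) _ edge_sym[OF x(2)]] by blast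
  moreover have "x \<in> V" "b \<in> V" using hole_subset hole \<open>b \<in> H\<close> x(1) by blast+
  ultimately show False using arc_asym \<open>arc x b\<close> by blast
qed

lemma petal_not_hangs_from_top:
  assumes hangs: "hangs_from H b" and x: "x \<in> H" "E b x"
  shows "\<not> hangs_from (Hf {b, x}) b"
proof
  let ?P = "Hf {b, x}"
  assume top: "hangs_from ?P b"
  have "b \<in> H" using hangs_from_mem hangs .
  note P = edge_petal[OF \<open>b \<in> H\<close> x]
  have e: "{b, x} \<in> induced_edges E H" using hole_edge \<open>b \<in> H\<close> x by blast
  obtain h where h: "h \<in> H" "h \<noteq> b" "E x h" using hole_other_neighbour[OF hole x(1)] by blast
  obtain y where y: "y \<in> ?P" "y \<noteq> b" "E x y" using hole_other_neighbour[OF P(1,3)] by blast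
  note xh = hangs_from_arcs[OF hole hangs x(1) h(1) x(2) h(3) h(2)]
    and xy = hangs_from_arcs[OF P(1) top P(3) y(1) x(2) y(3) y(2)]
  have "y \<notin> H" "h \<notin> ?P" using y h P(4) edge_irrefl by blast+
  have V: "x \<in> V" "y \<in> V" "h \<in> V" using hole_subset P(1) hole x(1) y(1) h(1) by blast+
  have "b \<noteq> x" "y \<noteq> x" "h \<noteq> x" using x(2) y(3) h(3) edge_irrefl by blast+
  have "\<not> below y h"
  proof (rule not_below_if_far_in_hole[OF P(1,2,3) y(1) \<open>b \<noteq> x\<close> \<open>y \<noteq> x\<close> xh(3) V(3)])
    fix v assume v: "v \<in> ?P" "v \<noteq> x" "v \<noteq> y"
    show "\<not> E v h"
    proof (cases "v = b")
      case True
      then show ?thesis using xh(4) edge_sym by blast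
    next
      case False
      then have "v \<notin> H" using P(4) v by blast
      then show ?thesis using petal_neighbour[OF e v(1)] \<open>h \<notin> ?P\<close> by blast
    qed
  qed
  moreover have "\<not> below h y"
  proof (rule not_below_if_far_in_hole[OF hole \<open>b \<in> H\<close> x(1) h(1) \<open>b \<noteq> x\<close> \<open>h \<noteq> x\<close> xy(3) V(2)])
    fix v assume v: "v \<in> H" "v \<noteq> x" "v \<noteq> h"
    show "\<not> E v y"
    proof (cases "v = b")
      case True
      then show ?thesis using xy(4) edge_sym by blast
    next
      case False
      then have "v \<notin> ?P" using P(4) v by blast
      then show ?thesis using petal_neighbour[OF e y(1) \<open>y \<notin> H\<close>] edge_sym by blast
    qed
  qed
  moreover have "y \<noteq> h" using y(1) \<open>h \<notin> ?P\<close> by blast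
  ultimately show False using out_arcs_comparable[OF V xy(2) xh(2)] by blast
qed

lemma petal_top_outside_hole:
  assumes hangs: "hangs_from H b" and x: "x \<in> H" "E b x" and top: "hangs_from (Hf {b, x}) t"
  shows "t \<notin> H"
proof
  assume "t \<in> H"
  have "b \<in> H" using hangs_from_mem hangs .
  with \<open>t \<in> H\<close> hangs_from_mem[OF top] edge_petal(4)[OF _ x] have "t = b \<or> t = x" by blast
  with top petal_not_hangs_from_top[OF hangs x] petal_not_hangs_from_top_neighbour[OF hangs x]
  show False by blast
qed

lemma below_petal_top:
  assumes H: "b \<in> H" "x1 \<in> H" "x2 \<in> H" "x1 \<noteq> x2" "E b x1" "E b x2"
    and top: "hangs_from (Hf {b, x1}) t" "t \<notin> H"
    and c: "c \<in> Hf {b, x2}" "c \<notin> H"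
  shows "below c t"
proof -
  let ?P1 = "Hf {b, x1}" and ?P2 = "Hf {b, x2}"
  note P1 = edge_petal[OF H(1,2,5)] and P2 = edge_petal[OF H(1,3,6)]
  have e1: "{b, x1} \<in> induced_edges E H" and e2: "{b, x2} \<in> induced_edges E H"
    using hole_edge H by blast+
  have "b \<noteq> x1" "b \<noteq> x2" using H(5,6) edge_irrefl by blast+
  then have "{b, x1} \<noteq> {b, x2}" "{b, x1} \<inter> {b, x2} = {b}" using H(4) by (auto simp: doubleton_eq_iff)
  then have P12: "?P1 \<inter> ?P2 = {b}" using petals_meet[OF e1 e2] by simp
  have "t \<in> ?P1" using hangs_from_mem top(1) .
  have tV: "t \<in> V" using hole_subset[OF P1(1)] \<open>t \<in> ?P1\<close> by blast
  have t_private: "v \<in> ?P1" if "E v t" for v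
    using petal_neighbour[OF e1 \<open>t \<in> ?P1\<close> top(2)] edge_sym that by blast
  have "below b t \<or> below x1 t"
    using hangs_from_edge_below[OF P1(1) top(1) P1(2,3) H(5)] H(1,2) top(2) by blast
  then have "below b t \<or> below x2 t"
  proof
    assume "below b t"
    then show ?thesis ..
  next
    assume "below x1 t"
    have "below x2 t"
    proof (rule below_spreads_in_hole[OF hole H(1,2) _ \<open>below x1 t\<close> tV])
      show "\<not> E v t" if "v \<in> H" "v \<noteq> b" "v \<noteq> x1" for v
        using t_private P1(4) that by blast
    qed (use H \<open>b \<noteq> x1\<close> \<open>b \<noteq> x2\<close> in auto)
    then show ?thesis ..
  qed
  moreover have far: "\<not> E v t" if "v \<in> ?P2" "v \<noteq> b" for v
    using t_private P12 that by blast
  ultimately show ?thesis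
  proof (elim disjE)
    assume "below b t"
    show ?thesis
      by (rule below_spreads_in_hole[OF P2(1) P2(3) P2(2) _ \<open>below b t\<close> tV])
        (use far c H \<open>b \<noteq> x2\<close> in auto)
  next
    assume "below x2 t"
    show ?thesis
      by (rule below_spreads_in_hole[OF P2(1) P2(2) P2(3) _ \<open>below x2 t\<close> tV])
        (use far c H \<open>b \<noteq> x2\<close> in auto)
  qed
qed

end

theorem (in abstract_burling) not_flower: "\<not> flower V E"
proof
  assume "flower V E"
  then obtain H Hf where hole: "is_hole V E H"
    and petal: "\<forall>e \<in> induced_edges E H. is_hole V E (Hf e) \<and> e \<subseteq> Hf e \<and> H \<inter> Hf e = e"
    and meet: "\<forall>e \<in> induced_edges E H. \<forall>e' \<in> induced_edges E H. e \<noteq> e' \<longrightarrow> Hf e \<inter> Hf e' = e \<inter> e'"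
    and edges: "\<forall>x y. E x y \<longleftrightarrow> (\<exists>e \<in> induced_edges E H. {x, y} \<in> induced_edges E (Hf e))"
    unfolding flower_def by (elim exE conjE) (rule that; assumption)
  interpret burling_flower V E arc below rank H Hf
  proof unfold_locales
    show "is_hole V E H" by fact
    show "is_hole V E (Hf e) \<and> e \<subseteq> Hf e \<and> H \<inter> Hf e = e" if "e \<in> induced_edges E H" for e
      using petal that by blast
    show "Hf e \<inter> Hf e' = e \<inter> e'"
      if "e \<in> induced_edges E H" "e' \<in> induced_edges E H" "e \<noteq> e'" for e e'
      using meet that by blast
    show "\<exists>e \<in> induced_edges E H. {x, y} \<in> induced_edges E (Hf e)" if "E x y" for x y
      using edges that by blast
  qed
  obtain b where b: "hangs_from H b" using hole_hangs[OF hole] by blast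
  then have "b \<in> H" by (rule hangs_from_mem)
  obtain x1 where x1: "x1 \<in> H" "E b x1" using hole_other_neighbour[OF hole \<open>b \<in> H\<close>] by blast
  obtain x2 where x2: "x2 \<in> H" "x1 \<noteq> x2" "E b x2"
    using hole_other_neighbour[OF hole \<open>b \<in> H\<close>] by metis
  obtain t1 where t1: "hangs_from (Hf {b, x1}) t1" using hole_hangs[OF edge_petal(1)[OF \<open>b \<in> H\<close> x1]] .
  obtain t2 where t2: "hangs_from (Hf {b, x2}) t2" using hole_hangs[OF edge_petal(1)[OF \<open>b \<in> H\<close> x2(1,3)]] .
  have out: "t1 \<notin> H" "t2 \<notin> H"
    using petal_top_outside_hole[OF b x1 t1] petal_top_outside_hole[OF b x2(1,3) t2] by simp_all
  have in_petal: "t1 \<in> Hf {b, x1}" "t2 \<in> Hf {b, x2}" using hangs_from_mem t1 t2 by blast+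
  have "below t2 t1"
    using below_petal_top[OF \<open>b \<in> H\<close> x1(1) x2(1,2) x1(2) x2(3) t1 out(1) in_petal(2) out(2)] .
  moreover have "below t1 t2"
    using below_petal_top[OF \<open>b \<in> H\<close> x2(1) x1(1) x2(2)[symmetric] x2(3) x1(2) t2 out(2)
        in_petal(1) out(1)] .
  moreover have "t1 \<in> V" "t2 \<in> V"
    using in_petal hole_subset[OF edge_petal(1)[OF \<open>b \<in> H\<close> x1]]
      hole_subset[OF edge_petal(1)[OF \<open>b \<in> H\<close> x2(1,3)]] by blast+
  ultimately show False using below_trans[of t1 t2 t1] below_irrefl[of t1] by blast
qed

theorem lemma7p1:
  fixes V :: "'a set" and E :: "'a \<Rightarrow> 'a \<Rightarrow> bool"
  assumes "sgraph V E" and "flower V E"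
  shows "\<not> burling_graph V E"
proof
  assume "burling_graph V E"
  then obtain T r p l c f where bt: "burling_tree T r p l c" and f: "inj_on f V" "f ` V \<subseteq> T"
    and adj: "\<forall>x \<in> V. \<forall>y \<in> V. E x y \<longleftrightarrow> (f y \<in> c (f x) \<or> f x \<in> c (f y))"
    unfolding burling_graph_def by (elim exE conjE) (rule that; assumption)
  interpret tree: abstract_burling T "\<lambda>u v. u \<in> T \<and> v \<in> T \<and> (v \<in> c u \<or> u \<in> c v)"
    "\<lambda>u v. v \<in> c u" "strictly_below p r" "depth p r"
    using bt by (rule burling_tree_abstract_burling)
  have fT: "\<And>x. x \<in> V \<Longrightarrow> f x \<in> T" using f(2) by blast
  interpret abstract_burling V E "\<lambda>x y. f y \<in> c (f x)" "\<lambda>x y. strictly_below p r (f x) (f y)"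
    "\<lambda>x. depth p r (f x)"
  proof (rule tree.induced_subgraph[OF assms(1) f(1) fT])
    fix x y assume "x \<in> V" "y \<in> V"
    then show "E x y \<longleftrightarrow> f x \<in> T \<and> f y \<in> T \<and> (f y \<in> c (f x) \<or> f x \<in> c (f y))"
      using adj fT by blast
  qed
  show False using not_flower assms(2) by contradiction
qed

end
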